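(* Let $\mathcal O$ be the suboperad of $\mathrm{CNCB}$ generated by $p:=T_{bbu}$ and $q:=T_{uub}$. Then $\mathcal O$ admits the presentation with generators $p,q$ of arity $2$ and relations $$(p\circ_2 p)\circ_2 q=(p\circ_1 q)\circ_1 p,\qquad (q\circ_2 q)\circ_2 p=(q\circ_1 p)\circ_1 q.$$ That is, $\mathcal O$ is isomorphic, via the morphism sending the generators to $p$ and $q$, to the quotient of the free operad on two binary generators by the operadic congruence generated by these two relations.
   Context: For $n\ge2$, a bicoloured noncrossing configuration (BNC) of size $n$ is a regular polygon with vertices $1,\dots,n+1$ clockwise, together with disjoint sets of blue and red arcs among the arcs $(i,j)$, $1\le i<j\le n+1$. The arcs $(i,i+1)$ are the edges ($i$th edge), $(1,n+1)$ is the base, and the others are diagonals. Coloured arcs are pairwise noncrossing ($(i,j),(k,l)$ cross iff $i<k<j<l$ or $k<i<l<j$), and red arcs are diagonals. There is one BNC of size $1$, a blue segment, which is the unit. The operad $\mathrm{CNCB}$ has the BNCs as elements (arity = size). Its composition $\mathfrak C\circ_i\mathfrak D$ ($\mathfrak C$ of size $n$, $\mathfrak D$ of size $m$) glues the base of $\mathfrak D$ on the $i$th edge of $\mathfrak C$. Arcs $(a,b)$ of $\mathfrak C$ become $(\sigma(a),\sigma(b))$ with $\sigma(v)=v$ for $v\le i$ and $v+m-1$ otherwise, and arcs $(a,b)$ of $\mathfrak D$ become $(a+i-1,b+i-1)$, keeping colours. The exception is the arc $(i,i+m)$, which is red if the $i$th edge of $\mathfrak C$ and the base of $\mathfrak D$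 are both uncoloured, blue if both are blue, and uncoloured otherwise. For $x,y,z\in\{b,u\}$, $T_{xyz}$ denotes the BNC of size $2$ (a triangle with vertices $1,2,3$) whose first edge $(1,2)$ has colour $x$, whose base $(1,3)$ has colour $y$, and whose second edge $(2,3)$ has colour $z$, where $b$ = blue and $u$ = uncoloured. The suboperad generated by a set is the smallest suboperad containing it. *)

theory Defs
  imports Main
begin

text \<open>A BNC of size n is represented by its size, its set of blue arcs and its set
  of red arcs.  Vertices are 1..n+1, an arc (i,j) has 1 <= i < j <= n+1.\<close>

datatype bnc = BNC nat "(nat \<times> nat) set" "(nat \<times> nat) set"

fun bsize :: "bnc \<Rightarrow> nat" where "bsize (BNC n B R) = n"
fun blues :: "bnc \<Rightarrow> (nat \<times> nat) set" where "blues (BNC n B R) = B"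
fun reds :: "bnc \<Rightarrow> (nat \<times> nat) set" where "reds (BNC n B R) = R"

definition arc_of :: "nat \<Rightarrow> nat \<times> nat \<Rightarrow> bool" where
  "arc_of n a \<longleftrightarrow> 1 \<le> fst a \<and> fst a < snd a \<and> snd a \<le> n + 1"

definition crossing :: "nat \<times> nat \<Rightarrow> nat \<times> nat \<Rightarrow> bool" where
  "crossing a c \<longleftrightarrow> (case a of (i, j) \<Rightarrow> case c of (k, l) \<Rightarrow>
       (i < k \<and> k < j \<and> j < l) \<or> (k < i \<and> i < l \<and> l < j))"

definition is_diagonal :: "nat \<Rightarrow> nat \<times> nat \<Rightarrow> bool" where
  "is_diagonal n a \<longleftrightarrow> arc_of n a \<and> snd a \<noteq> fst a + 1 \<and> a \<noteq> (1, n + 1)"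

definition is_bnc :: "bnc \<Rightarrow> bool" where
  "is_bnc C \<longleftrightarrow> (case C of BNC n B R \<Rightarrow>
     n \<ge> 1 \<and>
     (n = 1 \<longrightarrow> B = {(1, 2)} \<and> R = {}) \<and>
     (\<forall>a\<in>B \<union> R. arc_of n a) \<and> B \<inter> R = {} \<and>
     (\<forall>a\<in>R. is_diagonal n a) \<and>
     (\<forall>a\<in>B \<union> R. \<forall>c\<in>B \<union> R. \<not> crossing a c))"

definition bnc_unit :: bnc where
  "bnc_unit = BNC 1 {(1, 2)} {}"

text \<open>Partial composition C o_i D: glue the base of D on the i-th edge of C.\<close>
definition bnc_comp :: "bnc \<Rightarrow> nat \<Rightarrow> bnc \<Rightarrow> bnc" where
  "bnc_comp C i D =
    (let n = bsize C; m = bsize D;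
         \<sigma> = (\<lambda>v. if v \<le> i then v else v + m - 1);
         mapC = (\<lambda>S. {(\<sigma> a, \<sigma> b) | a b. (a, b) \<in> S \<and> (a, b) \<noteq> (i, i + 1)});
         mapD = (\<lambda>S. {(a + i - 1, b + i - 1) | a b. (a, b) \<in> S \<and> (a, b) \<noteq> (1, m + 1)});
         eC = (i, i + 1); bD = (1, m + 1);
         newB = (if eC \<in> blues C \<and> bD \<in> blues D then {(i, i + m)} else {});
         newR = (if eC \<notin> blues C \<union> reds C \<and> bD \<notin> blues D \<union> reds D
                 then {(i, i + m)} else {})
     in BNC (n + m - 1)
            (mapC (blues C) \<union> mapD (blues D) \<union> newB)
            (mapC (reds C) \<union> mapD (reds D) \<union> newR))"

text \<open>T_xyz: first edge (1,2) colour x, base (1,3) colour y, second edge (2,3) colour z.\<close>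
definition T_bbu :: bnc where "T_bbu = BNC 2 {(1, 2), (1, 3)} {}"
definition T_uub :: bnc where "T_uub = BNC 2 {(2, 3)} {}"

inductive_set generated_suboperad :: "bnc set \<Rightarrow> bnc set" for S where
  gen: "x \<in> S \<Longrightarrow> x \<in> generated_suboperad S"
| unit: "bnc_unit \<in> generated_suboperad S"
| comp: "x \<in> generated_suboperad S \<Longrightarrow> y \<in> generated_suboperad S \<Longrightarrow>
         1 \<le> i \<Longrightarrow> i \<le> bsize x \<Longrightarrow> bnc_comp x i y \<in> generated_suboperad S"

datatype lab = GP | GQ
datatype tree = Leaf | Node lab tree tree

fun arity :: "tree \<Rightarrow> nat" where
  "arity Leaf = 1"
| "arity (Node g l r) = arity l + arity r"

fun tcomp :: "tree \<Rightarrow> nat \<Rightarrow> tree \<Rightarrow> tree" where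
  "tcomp Leaf i s = (if i = 1 then s else Leaf)"
| "tcomp (Node g l r) i s =
     (if i \<le> arity l then Node g (tcomp l i s) r
      else Node g l (tcomp r (i - arity l) s))"

definition gp :: tree where "gp = Node GP Leaf Leaf"
definition gq :: tree where "gq = Node GQ Leaf Leaf"

inductive rels :: "tree \<Rightarrow> tree \<Rightarrow> bool" where
  "rels (tcomp (tcomp gp 2 gp) 2 gq) (tcomp (tcomp gp 1 gq) 1 gp)"
| "rels (tcomp (tcomp gq 2 gq) 2 gp) (tcomp (tcomp gq 1 gp) 1 gq)"

inductive op_cong :: "(tree \<Rightarrow> tree \<Rightarrow> bool) \<Rightarrow> tree \<Rightarrow> tree \<Rightarrow> bool" for \<rho> where
  base: "\<rho> t s \<Longrightarrow> op_cong \<rho> t s"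
| refl: "op_cong \<rho> t t"
| sym: "op_cong \<rho> t s \<Longrightarrow> op_cong \<rho> s t"
| trans: "op_cong \<rho> t s \<Longrightarrow> op_cong \<rho> s u \<Longrightarrow> op_cong \<rho> t u"
| compL: "op_cong \<rho> t t' \<Longrightarrow> 1 \<le> i \<Longrightarrow> i \<le> arity t \<Longrightarrow>
          op_cong \<rho> (tcomp t i s) (tcomp t' i s)"
| compR: "op_cong \<rho> s s' \<Longrightarrow> 1 \<le> i \<Longrightarrow> i \<le> arity t \<Longrightarrow>
          op_cong \<rho> (tcomp t i s) (tcomp t i s')"

text \<open>The operad morphism from the free operad to CNCB sending the generators to
  p = T_bbu and q = T_uub (Node g l r = (g o_2 r) o_1 l in the free operad).\<close>
fun gen_val :: "lab \<Rightarrow> bnc" where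
  "gen_val GP = T_bbu"
| "gen_val GQ = T_uub"

fun eval :: "tree \<Rightarrow> bnc" where
  "eval Leaf = bnc_unit"
| "eval (Node g l r) = bnc_comp (bnc_comp (gen_val g) 2 (eval r)) 1 (eval l)"

end

theory Submission
  imports Defs
begin

(* A tree t of the free operad is a dissection of the polygon with arity t + 1 vertices into
   triangles, one per node: the subtree occupying the leaves u, ..., v - 1 contributes the arc
   (u, v).  The configuration eval t consists of exactly these arcs, each coloured blue, red or
   not at all by a rule local to the node above it.  This explicit description makes eval an
   operad morphism, so its range is the generated suboperad.

   Injectivity modulo the relations goes by induction on the arity.  If eval t = eval s has a
   coloured diagonal, t and s both split along it as t1 o_u t2 and s1 o_u s2, and
   eval t1 = eval s1, eval t2 = eval s2 can be read off the two sides of the diagonal.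
   Otherwise no diagonal is coloured, which forces the labels of t and s to alternate; the two
   relations then rotate such trees into a canonical comb, and a comb is determined by the
   colours of the edges of the polygon. *)

lemma arity_pos: "1 \<le> arity t"
  by (induction t) auto

lemma arity_Node_ge2: "2 \<le> arity (Node g l r)"
  using arity_pos[of l] arity_pos[of r] by simp

lemma arity_eq_1_iff: "arity t = 1 \<longleftrightarrow> t = Leaf"
proof (cases t)
  case (Node g l r)
  then show ?thesis using arity_Node_ge2[of g l r] by simp
qed simp

lemma arity_tcomp: "1 \<le> i \<Longrightarrow> i \<le> arity t \<Longrightarrow> arity (tcomp t i s) = arity t + arity s - 1"
  by (induction t arbitrary: i) (auto simp: arity_pos)

datatype colour = Blue | Red | Plain

(* The colour bnc_comp gives to the arc (i, i + m) created by gluing, when the i-th edge is blue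
   iff e and the base glued onto it is blue iff b. *)
definition glue :: "bool \<Rightarrow> bool \<Rightarrow> colour" where
  "glue e b = (if e \<and> b then Blue else if \<not> e \<and> \<not> b then Red else Plain)"

lemma glue_inj: "glue e b = glue e' b' \<Longrightarrow> glue e b \<noteq> Plain \<Longrightarrow> e = e' \<and> b = b'"
  by (auto simp: glue_def split: if_splits)

fun base_blue :: "tree \<Rightarrow> bool" where
  "base_blue Leaf = True"
| "base_blue (Node g l r) = (g = GP)"

(* e says whether the edge that t is grafted onto is blue; the first edge of T_bbu and the second
   edge of T_uub are blue. *)
fun edge_blue :: "bool \<Rightarrow> tree \<Rightarrow> bool list" where
  "edge_blue e Leaf = [e]"
| "edge_blue e (Node g l r) = edge_blue (g = GP) l @ edge_blue (g = GQ) r"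

lemma length_edge_blue: "length (edge_blue e t) = arity t"
  by (induction t arbitrary: e) auto

lemma edge_blue_Node_indep: "t \<noteq> Leaf \<Longrightarrow> edge_blue e t = edge_blue e' t"
  by (cases t) auto

type_synonym arc_set = "((nat \<times> nat) \<times> colour) set"

definition relabel :: "(nat \<Rightarrow> nat) \<Rightarrow> arc_set \<Rightarrow> arc_set" where
  "relabel f S = {((f u, f v), k) | u v k. ((u, v), k) \<in> S}"

lemma relabel_iff: "((u, v), k) \<in> relabel f S \<longleftrightarrow> (\<exists>a b. ((a, b), k) \<in> S \<and> u = f a \<and> v = f b)"
  by (auto simp: relabel_def)

lemma relabel_shift_iff:
  "((u, v), k) \<in> relabel ((+) d) S \<longleftrightarrow> d \<le> u \<and> d \<le> v \<and> ((u - d, v - d), k) \<in> S"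
  by (auto simp: relabel_iff) (metis add_diff_inverse_nat not_le)

lemma relabel_empty [simp]: "relabel f {} = {}"
  by (simp add: relabel_def)

lemma relabel_Un: "relabel f (A \<union> B) = relabel f A \<union> relabel f B"
  by (auto simp: relabel_def)

lemma relabel_insert: "relabel f (insert ((u, v), k) S) = insert ((f u, f v), k) (relabel f S)"
  by (auto simp: relabel_def)

lemma relabel_cong:
  "(\<And>u v k. ((u, v), k) \<in> S \<Longrightarrow> f u = g u \<and> f v = g v) \<Longrightarrow> relabel f S = relabel g S"
  by (force simp: relabel_def)

lemma relabel_ident: "(\<And>u v k. ((u, v), k) \<in> S \<Longrightarrow> f u = u \<and> f v = v) \<Longrightarrow> relabel f S = S"
  by (force simp: relabel_def)

lemma relabel_filter: "{y \<in> relabel f S. fst y \<noteq> p} = relabel f {y \<in> S. map_prod f f (fst y) \<noteq> p}"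
  by (auto simp: relabel_def) blast

lemma relabel_relabel: "relabel f (relabel g S) = relabel (f \<circ> g) S"
  by (auto simp: relabel_def) blast

lemma relabel_inj:
  assumes "inj f" "relabel f A = relabel f B"
  shows "A = B"
proof -
  have "((u, v), k) \<in> B" if "((u, v), k) \<in> A" "relabel f A = relabel f B" for u v k A B
  proof -
    have "((f u, f v), k) \<in> relabel f A" using that(1) by (auto simp: relabel_iff)
    then have "((f u, f v), k) \<in> relabel f B" using that(2) by simp
    then show ?thesis using injD[OF assms(1)] by (auto simp: relabel_iff)
  qed
  then show ?thesis using assms(2) by (auto intro: set_eqI)
qed

(* arcs e t is the dissection given by t, edges and base included, each arc with its colour in
   eval t (Plain for an uncoloured arc), when t is grafted onto an edge that is blue iff e;
   inner_arcs t leaves out the base, the only arc whose colour depends on e. *)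
fun inner_arcs :: "tree \<Rightarrow> arc_set" where
  "inner_arcs Leaf = {}"
| "inner_arcs (Node g l r) =
     insert ((1, arity l + 1), glue (g = GP) (base_blue l)) (inner_arcs l)
     \<union> relabel ((+) (arity l)) (insert ((1, arity r + 1), glue (g = GQ) (base_blue r)) (inner_arcs r))"

definition arcs :: "bool \<Rightarrow> tree \<Rightarrow> arc_set" where
  "arcs e t = insert ((1, arity t + 1), glue e (base_blue t)) (inner_arcs t)"

lemma inner_arcs_Node:
  "inner_arcs (Node g l r) = arcs (g = GP) l \<union> relabel ((+) (arity l)) (arcs (g = GQ) r)"
  by (simp add: arcs_def)

declare inner_arcs.simps(2)[simp del]

lemma arcs_Leaf: "arcs e Leaf = {((1, 2), glue e True)}"
  by (simp add: arcs_def)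

lemma arcs_Node: "arcs e (Node g l r) = insert ((1, arity l + arity r + 1), glue e (g = GP))
   (arcs (g = GP) l \<union> relabel ((+) (arity l)) (arcs (g = GQ) r))"
  by (simp add: arcs_def inner_arcs_Node)

lemma inner_arcs_range:
  "((u, v), k) \<in> inner_arcs t \<Longrightarrow> 1 \<le> u \<and> u < v \<and> v \<le> arity t + 1 \<and> (u, v) \<noteq> (1, arity t + 1)"
proof (induction t arbitrary: u v)
  case (Node g l r)
  then show ?case using arity_pos[of l] arity_pos[of r]
    by (fastforce simp: inner_arcs_Node arcs_def relabel_iff)
qed simp

lemma arcs_range: "((u, v), k) \<in> arcs e t \<Longrightarrow> 1 \<le> u \<and> u < v \<and> v \<le> arity t + 1"
  using inner_arcs_range[of u v k t] arity_pos[of t] by (auto simp: arcs_def)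

lemma base_notin_inner_arcs: "((1, arity t + 1), k) \<notin> inner_arcs t"
  using inner_arcs_range by blast

lemma inner_arcs_eq_filter: "inner_arcs t = {y \<in> arcs e t. fst y \<noteq> (1, arity t + 1)}"
  using base_notin_inner_arcs by (force simp: arcs_def)

lemma arcs_change_flag:
  "arcs e t = insert ((1, arity t + 1), glue e (base_blue t)) {y \<in> arcs e' t. fst y \<noteq> (1, arity t + 1)}"
  using inner_arcs_eq_filter[of t e'] by (simp add: arcs_def)

lemma arcs_base_colour_iff: "((1, arity t + 1), k) \<in> arcs e t \<longleftrightarrow> k = glue e (base_blue t)"
  using base_notin_inner_arcs by (auto simp: arcs_def)

lemma arcs_functional: "(a, k) \<in> arcs e t \<Longrightarrow> (a, k') \<in> arcs e t \<Longrightarrow> k = k'"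
proof (induction t arbitrary: e a k k')
  case Leaf
  then show ?case by (simp add: arcs_def)
next
  case (Node g l r)
  obtain u v where a: "a = (u, v)" by fastforce
  have left: "v \<le> arity l + 1" if "((u, v), c) \<in> arcs (g = GP) l" for c
    using arcs_range[OF that] by simp
  have right: "arity l < u \<and> ((u - arity l, v - arity l), c) \<in> arcs (g = GQ) r"
    if "((u, v), c) \<in> relabel ((+) (arity l)) (arcs (g = GQ) r)" for c
    using that by (auto simp: relabel_iff dest: arcs_range)
  have "a \<noteq> (1, arity l + arity r + 1)"
    if "(a, c) \<in> arcs (g = GP) l \<union> relabel ((+) (arity l)) (arcs (g = GQ) r)" for c
    using that left[of c] right[of c] arity_pos[of l] arity_pos[of r] unfolding a by auto
  moreover have "\<not> ((a, c) \<in> arcs (g = GP) l \<and> (a, c') \<in> relabel ((+) (arity l)) (arcs (g = GQ) r))"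
    for c c'
    using left[of c] right[of c'] arcs_range[of u v c "g = GP" l] unfolding a by auto
  ultimately show ?case
    using Node.prems Node.IH(1)[where e = "g = GP" and a = a]
      Node.IH(2)[where e = "g = GQ" and a = "(u - arity l, v - arity l)"] right[of k] right[of k']
    unfolding arcs_Node a by blast
qed

lemma edge_mem_arcs:
  "1 \<le> i \<Longrightarrow> i \<le> arity t \<Longrightarrow> ((i, i + 1), glue (edge_blue e t ! (i - 1)) True) \<in> arcs e t"
proof (induction t arbitrary: e i)
  case (Node g l r)
  show ?case
  proof (cases "i \<le> arity l")
    case True
    then have "edge_blue e (Node g l r) ! (i - 1) = edge_blue (g = GP) l ! (i - 1)"
      using Node.prems by (auto simp: nth_append length_edge_blue)
    then show ?thesis using Node.IH(1)[where i = i and e = "g = GP"] Node.prems True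
      by (simp add: arcs_Node)
  next
    case False
    then have "edge_blue e (Node g l r) ! (i - 1) = edge_blue (g = GQ) r ! (i - arity l - 1)"
      by (auto simp: nth_append length_edge_blue)
    moreover have "((i - arity l, i - arity l + 1), glue (edge_blue (g = GQ) r ! (i - arity l - 1)) True)
        \<in> arcs (g = GQ) r"
      using Node.IH(2)[where i = "i - arity l" and e = "g = GQ"] Node.prems False by simp
    moreover have "Suc i - arity l = Suc (i - arity l)" using False by simp
    ultimately show ?thesis using False by (simp add: arcs_Node relabel_shift_iff)
  qed
qed (simp add: arcs_Leaf)

lemma arcs_edge_colour_iff:
  assumes "1 \<le> i" "i \<le> arity t"
  shows "((i, i + 1), k) \<in> arcs e t \<longleftrightarrow> k = glue (edge_blue e t ! (i - 1)) True"
  using edge_mem_arcs[OF assms] arcs_functional by blast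

lemma arcs_edge_split:
  assumes "1 \<le> i" "i \<le> arity t"
  shows "arcs e t = insert ((i, i + 1), glue (edge_blue e t ! (i - 1)) True) {y \<in> arcs e t. fst y \<noteq> (i, i + 1)}"
  using arcs_edge_colour_iff[OF assms] by auto

(* The renumbering of the vertices of the outer configuration in bnc_comp. *)
definition stretch :: "nat \<Rightarrow> nat \<Rightarrow> nat \<Rightarrow> nat" where
  "stretch i m v = (if v \<le> i then v else v + m - 1)"

lemma inj_stretch: "1 \<le> m \<Longrightarrow> inj (stretch i m)"
  by (rule injI) (auto simp: stretch_def split: if_splits)

definition grafted_arcs :: "bool \<Rightarrow> tree \<Rightarrow> nat \<Rightarrow> tree \<Rightarrow> arc_set" where
  "grafted_arcs e t i s = relabel (stretch i (arity s)) {y \<in> arcs e t. fst y \<noteq> (i, i + 1)}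
     \<union> relabel ((+) (i - 1)) (arcs (edge_blue e t ! (i - 1)) s)"

lemma grafted_arcs_Node_left:
  assumes i: "1 \<le> i" "i \<le> arity l"
  shows "grafted_arcs e (Node g l r) i s = insert ((1, arity l + arity s - 1 + arity r + 1), glue e (g = GP))
    (grafted_arcs (g = GP) l i s \<union> relabel ((+) (arity l + arity s - 1)) (arcs (g = GQ) r))"
proof -
  define a where "a = arity l"
  define m where "m = arity s"
  have pos: "1 \<le> m" "1 \<le> arity r" using arity_pos unfolding m_def by auto
  let ?\<sigma> = "stretch i m"
  let ?L = "{y \<in> arcs (g = GP) l. fst y \<noteq> (i, i + 1)}"
  have filter: "{y \<in> arcs e (Node g l r). fst y \<noteq> (i, i + 1)}
      = insert ((1, a + arity r + 1), glue e (g = GP)) (?L \<union> relabel ((+) a) (arcs (g = GQ) r))"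
    using i pos by (force simp: arcs_Node a_def relabel_iff dest: arcs_range)
  have shifted: "relabel ?\<sigma> (relabel ((+) a) (arcs (g = GQ) r)) = relabel ((+) (a + m - 1)) (arcs (g = GQ) r)"
    unfolding relabel_relabel
    by (rule relabel_cong) (use i pos in \<open>auto simp: stretch_def a_def dest: arcs_range\<close>)
  have flag: "edge_blue e (Node g l r) ! (i - 1) = edge_blue (g = GP) l ! (i - 1)"
    using i by (auto simp: nth_append length_edge_blue)
  have ends: "?\<sigma> 1 = 1" "?\<sigma> (a + arity r + 1) = a + m - 1 + arity r + 1"
    using i pos by (auto simp: stretch_def a_def)
  show ?thesis
    unfolding grafted_arcs_def a_def[symmetric] m_def[symmetric] filter relabel_insert relabel_Un shifted
      flag ends
    by blast
qed

lemma grafted_arcs_Node_right: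
  assumes i: "arity l < i" "i \<le> arity l + arity r"
  shows "grafted_arcs e (Node g l r) i s = insert ((1, arity l + (arity r + arity s - 1) + 1), glue e (g = GP))
    (arcs (g = GP) l \<union> relabel ((+) (arity l)) (grafted_arcs (g = GQ) r (i - arity l) s))"
proof -
  define a where "a = arity l"
  define m where "m = arity s"
  have pos: "1 \<le> a" "1 \<le> m" using arity_pos unfolding a_def m_def by auto
  let ?\<sigma> = "stretch i m"
  let ?R = "{y \<in> arcs (g = GQ) r. fst y \<noteq> (i - a, i - a + 1)}"
  have filter: "{y \<in> arcs e (Node g l r). fst y \<noteq> (i, i + 1)}
      = insert ((1, a + arity r + 1), glue e (g = GP)) (arcs (g = GP) l \<union> relabel ((+) a) ?R)"
  proof -
    have "{y \<in> relabel ((+) a) (arcs (g = GQ) r). fst y \<noteq> (i, i + 1)} = relabel ((+) a) ?R"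
      unfolding relabel_filter
      by (rule arg_cong[where f = "relabel _"]) (use i in \<open>auto simp: a_def\<close>)
    moreover have "{y \<in> arcs (g = GP) l. fst y \<noteq> (i, i + 1)} = arcs (g = GP) l"
      using i by (auto simp: a_def dest: arcs_range)
    moreover have "(1, a + arity r + 1) \<noteq> (i, i + 1)" using i pos by simp
    ultimately show ?thesis by (auto simp: arcs_Node a_def)
  qed
  have left: "relabel ?\<sigma> (arcs (g = GP) l) = arcs (g = GP) l"
    by (rule relabel_ident) (use i in \<open>auto simp: stretch_def a_def dest: arcs_range\<close>)
  have right: "relabel ?\<sigma> (relabel ((+) a) ?R) = relabel ((+) a) (relabel (stretch (i - a) m) ?R)"
    unfolding relabel_relabel
    by (rule relabel_cong) (use i pos in \<open>auto simp: stretch_def a_def dest: arcs_range\<close>)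
  have inserted: "relabel ((+) (i - 1)) X = relabel ((+) a) (relabel ((+) (i - a - 1)) X)" for X
    unfolding relabel_relabel by (rule relabel_cong) (use i in \<open>auto simp: a_def\<close>)
  have flag: "edge_blue e (Node g l r) ! (i - 1) = edge_blue (g = GQ) r ! (i - a - 1)"
    using i by (auto simp: nth_append length_edge_blue a_def)
  have ends: "?\<sigma> 1 = 1" "?\<sigma> (a + arity r + 1) = a + (arity r + m - 1) + 1"
    using i pos by (auto simp: stretch_def a_def)
  show ?thesis
    unfolding grafted_arcs_def a_def[symmetric] m_def[symmetric] filter relabel_insert relabel_Un left
      right inserted flag ends
    by blast
qed

lemma arcs_tcomp: "1 \<le> i \<Longrightarrow> i \<le> arity t \<Longrightarrow> arcs e (tcomp t i s) = grafted_arcs e t i s"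
proof (induction t arbitrary: e i)
  case Leaf
  then show ?case by (auto simp: grafted_arcs_def arcs_Leaf relabel_def)
next
  case (Node g l r)
  show ?case
  proof (cases "i \<le> arity l")
    case True
    then show ?thesis
      using Node.IH(1)[of i "g = GP"] Node.prems arity_tcomp[of i l s]
      by (simp add: arcs_Node grafted_arcs_Node_left)
  next
    case False
    then show ?thesis
      using Node.IH(2)[of "i - arity l" "g = GQ"] Node.prems arity_tcomp[of "i - arity l" r s]
      by (simp add: arcs_Node grafted_arcs_Node_right)
  qed
qed

lemma arcs_tcomp_colour:
  assumes "1 \<le> i" "i \<le> arity t"
  shows "{a. (a, k) \<in> arcs e (tcomp t i s)} =
      {(stretch i (arity s) u, stretch i (arity s) v) | u v. ((u, v), k) \<in> arcs e t \<and> (u, v) \<noteq> (i, i + 1)}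
    \<union> {(u + i - 1, v + i - 1) | u v. ((u, v), k) \<in> arcs e' s \<and> (u, v) \<noteq> (1, arity s + 1)}
    \<union> (if glue (edge_blue e t ! (i - 1)) (base_blue s) = k then {(i, i + arity s)} else {})"
proof -
  let ?\<sigma> = "stretch i (arity s)"
  let ?T = "{y \<in> arcs e t. fst y \<noteq> (i, i + 1)}"
  let ?S = "{y \<in> arcs e' s. fst y \<noteq> (1, arity s + 1)}"
  have "arcs e (tcomp t i s) = relabel ?\<sigma> ?T
      \<union> insert ((i, i + arity s), glue (edge_blue e t ! (i - 1)) (base_blue s)) (relabel ((+) (i - 1)) ?S)"
    unfolding arcs_tcomp[OF assms] grafted_arcs_def
      arcs_change_flag[of "edge_blue e t ! (i - 1)" s e'] relabel_insert
    using assms by simp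
  then have "{a. (a, k) \<in> arcs e (tcomp t i s)} = {a. (a, k) \<in> relabel ?\<sigma> ?T}
      \<union> {a. (a, k) \<in> relabel ((+) (i - 1)) ?S}
      \<union> (if glue (edge_blue e t ! (i - 1)) (base_blue s) = k then {(i, i + arity s)} else {})"
    by auto
  also have "{a. (a, k) \<in> relabel ?\<sigma> ?T}
      = {(?\<sigma> u, ?\<sigma> v) | u v. ((u, v), k) \<in> arcs e t \<and> (u, v) \<noteq> (i, i + 1)}"
    by (auto simp: relabel_def)
  also have "{a. (a, k) \<in> relabel ((+) (i - 1)) ?S}
      = {(u + i - 1, v + i - 1) | u v. ((u, v), k) \<in> arcs e' s \<and> (u, v) \<noteq> (1, arity s + 1)}"
    using assms by (force simp: relabel_def)
  finally show ?thesis .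
qed

definition bnc_of :: "tree \<Rightarrow> bnc" where
  "bnc_of t = BNC (arity t) {a. (a, Blue) \<in> arcs True t} {a. (a, Red) \<in> arcs True t}"

lemma bnc_of_tcomp:
  assumes "1 \<le> i" "i \<le> arity t"
  shows "bnc_comp (bnc_of t) i (bnc_of s) = bnc_of (tcomp t i s)"
proof -
  define p where "p = edge_blue True t ! (i - 1)"
  have edge: "((i, i + 1), k) \<in> arcs True t \<longleftrightarrow> k = glue p True" for k
    using arcs_edge_colour_iff[OF assms] p_def by simp
  have base: "((1, arity s + 1), k) \<in> arcs True s \<longleftrightarrow> k = glue True (base_blue s)" for k
    by (rule arcs_base_colour_iff)
  show ?thesis
    unfolding bnc_comp_def bnc_of_def Let_def bsize.simps blues.simps reds.simps
      arcs_tcomp_colour[OF assms, where e' = True] arity_tcomp[OF assms] stretch_def[symmetric]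
      p_def[symmetric]
    by (simp only: mem_Collect_eq Un_iff edge base) (simp add: glue_def)
qed

lemma bnc_of_Leaf: "bnc_of Leaf = bnc_unit"
  by (simp add: bnc_of_def bnc_unit_def arcs_Leaf glue_def)

lemma bnc_of_generator: "bnc_of (Node g Leaf Leaf) = gen_val g"
  by (cases g) (auto simp: bnc_of_def arcs_Node arcs_Leaf relabel_insert T_bbu_def T_uub_def glue_def)

lemma eval_eq_bnc_of: "eval t = bnc_of t"
proof (induction t)
  case Leaf
  then show ?case by (simp add: bnc_of_Leaf)
next
  case (Node g l r)
  have "eval (Node g l r) = bnc_comp (bnc_comp (bnc_of (Node g Leaf Leaf)) 2 (bnc_of r)) 1 (bnc_of l)"
    using Node.IH by (simp add: bnc_of_generator)
  also have "\<dots> = bnc_of (tcomp (tcomp (Node g Leaf Leaf) 2 r) 1 l)"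
    using arity_pos[of r] by (simp add: bnc_of_tcomp)
  finally show ?case by simp
qed

lemma bsize_eval: "bsize (eval t) = arity t"
  by (simp add: eval_eq_bnc_of bnc_of_def)

lemma eval_tcomp: "1 \<le> i \<Longrightarrow> i \<le> arity t \<Longrightarrow> eval (tcomp t i s) = bnc_comp (eval t) i (eval s)"
  by (simp add: eval_eq_bnc_of bnc_of_tcomp)

lemma eval_in_generated_suboperad: "eval t \<in> generated_suboperad {T_bbu, T_uub}"
proof (induction t)
  case Leaf
  then show ?case by (simp add: generated_suboperad.unit)
next
  case (Node g l r)
  have gen: "gen_val g \<in> generated_suboperad {T_bbu, T_uub}" "bsize (gen_val g) = 2"
    by (cases g; simp add: generated_suboperad.gen T_bbu_def T_uub_def)+
  then have "bnc_comp (gen_val g) 2 (eval r) \<in> generated_suboperad {T_bbu, T_uub}"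
    using generated_suboperad.comp[OF gen(1) Node.IH(2)] by simp
  moreover have "1 \<le> bsize (bnc_comp (gen_val g) 2 (eval r))"
    using gen(2) arity_pos[of r] by (simp add: bnc_comp_def Let_def bsize_eval)
  ultimately show ?case using generated_suboperad.comp[OF _ Node.IH(1)] by simp
qed

lemma generated_suboperad_subset_range: "x \<in> generated_suboperad {T_bbu, T_uub} \<Longrightarrow> x \<in> range eval"
proof (induction rule: generated_suboperad.induct)
  case (gen x)
  have "gen_val g \<in> range eval" for g
    using bnc_of_generator[of g] by (metis eval_eq_bnc_of rangeI)
  then show ?case using gen by (metis gen_val.simps insertE singletonD)
next
  case unit
  then show ?case by (metis bnc_of_Leaf eval_eq_bnc_of rangeI)
next
  case (comp x y i)
  then obtain t s where "x = eval t" "y = eval s" by blast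
  then show ?case using comp eval_tcomp[of i t s] by (metis bsize_eval rangeI)
qed

lemma range_eval: "range eval = generated_suboperad {T_bbu, T_uub}"
  using eval_in_generated_suboperad generated_suboperad_subset_range by blast

lemma eval_rels: "rels t s \<Longrightarrow> eval t = eval s"
  by (induction rule: rels.induct)
    (auto simp: eval_eq_bnc_of bnc_of_def arcs_Node arcs_Leaf relabel_insert gp_def gq_def glue_def)

lemma eval_op_cong: "op_cong rels t s \<Longrightarrow> eval t = eval s"
proof (induction rule: op_cong.induct)
  case (compL t t' i s)
  then show ?case by (metis bsize_eval eval_tcomp)
qed (auto simp: eval_rels eval_tcomp)

lemma op_cong_arity: "op_cong rels t s \<Longrightarrow> arity t = arity s"
  by (metis bsize_eval eval_op_cong)

definition coloured :: "arc_set \<Rightarrow> arc_set" where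
  "coloured S = {y \<in> S. snd y \<noteq> Plain}"

lemma coloured_eq_iff:
  "coloured S = coloured S' \<longleftrightarrow>
     {a. (a, Blue) \<in> S} = {a. (a, Blue) \<in> S'} \<and> {a. (a, Red) \<in> S} = {a. (a, Red) \<in> S'}"
proof
  assume eq: "coloured S = coloured S'"
  have "(a, k) \<in> S \<longleftrightarrow> (a, k) \<in> S'" if "k \<noteq> Plain" for a k
    using that eq[unfolded set_eq_iff, rule_format, of "(a, k)"] by (simp add: coloured_def)
  then show "{a. (a, Blue) \<in> S} = {a. (a, Blue) \<in> S'} \<and> {a. (a, Red) \<in> S} = {a. (a, Red) \<in> S'}"
    by auto
next
  assume "{a. (a, Blue) \<in> S} = {a. (a, Blue) \<in> S'} \<and> {a. (a, Red) \<in> S} = {a. (a, Red) \<in> S'}"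
  then have "(a, k) \<in> S \<longleftrightarrow> (a, k) \<in> S'" if "k \<noteq> Plain" for a k
    using that by (cases k) (metis (mono_tags) mem_Collect_eq)+
  then show "coloured S = coloured S'" by (fastforce simp: coloured_def)
qed

lemma coloured_eq_mem: "coloured S = coloured S' \<Longrightarrow> k \<noteq> Plain \<Longrightarrow> (a, k) \<in> S \<longleftrightarrow> (a, k) \<in> S'"
  unfolding coloured_def set_eq_iff by (metis (mono_tags, lifting) mem_Collect_eq snd_conv)

lemma coloured_relabel: "coloured (relabel f S) = relabel f (coloured S)"
  by (force simp: coloured_def relabel_def)

lemma coloured_filter: "coloured {y \<in> S. P y} = {y \<in> coloured S. P y}"
  by (auto simp: coloured_def)

lemma coloured_insert: "coloured (insert y S) = (if snd y = Plain then coloured S else insert y (coloured S))"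
  by (auto simp: coloured_def)

lemma eval_eq_iff: "eval t = eval s \<longleftrightarrow> arity t = arity s \<and> coloured (arcs True t) = coloured (arcs True s)"
  by (simp add: eval_eq_bnc_of bnc_of_def coloured_eq_iff)

lemma arcs_tcomp_split:
  fixes t s :: tree
  assumes "1 \<le> i" "i \<le> arity t"
  defines "inside \<equiv> \<lambda>y. i \<le> fst (fst y) \<and> snd (fst y) \<le> i + arity s"
  shows "{y \<in> arcs e (tcomp t i s). inside y} = relabel ((+) (i - 1)) (arcs (edge_blue e t ! (i - 1)) s)"
    and "{y \<in> arcs e (tcomp t i s). \<not> inside y}
      = relabel (stretch i (arity s)) {y \<in> arcs e t. fst y \<noteq> (i, i + 1)}"
proof -
  have "inside y" if "y \<in> relabel ((+) (i - 1)) (arcs p s)" for y p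
    using that assms(1) by (auto simp: relabel_def inside_def dest: arcs_range)
  moreover have "\<not> inside ((stretch i (arity s) u, stretch i (arity s) v), k)"
    if "((u, v), k) \<in> arcs e t" "(u, v) \<noteq> (i, i + 1)" for u v k
    using that arcs_range[OF that(1)] arity_pos[of s] by (auto simp: inside_def stretch_def)
  then have "\<not> inside y" if "y \<in> relabel (stretch i (arity s)) {y \<in> arcs e t. fst y \<noteq> (i, i + 1)}" for y
    using that by (auto simp: relabel_def)
  ultimately show "{y \<in> arcs e (tcomp t i s). inside y} = relabel ((+) (i - 1)) (arcs (edge_blue e t ! (i - 1)) s)"
    and "{y \<in> arcs e (tcomp t i s). \<not> inside y}
      = relabel (stretch i (arity s)) {y \<in> arcs e t. fst y \<noteq> (i, i + 1)}"
    unfolding arcs_tcomp[OF assms(1,2)] grafted_arcs_def by blast+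
qed

lemma coloured_arcs_tcomp_cancel:
  assumes C: "coloured (arcs e (tcomp t1 x t2)) = coloured (arcs e (tcomp s1 x s2))"
    and ar: "arity t2 = arity s2" and x: "1 \<le> x" "x \<le> arity t1" "x \<le> arity s1"
  shows "coloured (arcs (edge_blue e t1 ! (x - 1)) t2) = coloured (arcs (edge_blue e s1 ! (x - 1)) s2)"
    and "coloured {y \<in> arcs e t1. fst y \<noteq> (x, x + 1)} = coloured {y \<in> arcs e s1. fst y \<noteq> (x, x + 1)}"
proof -
  define inside where "inside = (\<lambda>y :: (nat \<times> nat) \<times> colour. x \<le> fst (fst y) \<and> snd (fst y) \<le> x + arity t2)"
  have split_t: "{y \<in> arcs e (tcomp t1 x t2). inside y} = relabel ((+) (x - 1)) (arcs (edge_blue e t1 ! (x - 1)) t2)"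
      "{y \<in> arcs e (tcomp t1 x t2). \<not> inside y}
        = relabel (stretch x (arity t2)) {y \<in> arcs e t1. fst y \<noteq> (x, x + 1)}"
    using arcs_tcomp_split[OF x(1,2), of e t2] by (simp_all add: inside_def)
  have split_s: "{y \<in> arcs e (tcomp s1 x s2). inside y} = relabel ((+) (x - 1)) (arcs (edge_blue e s1 ! (x - 1)) s2)"
      "{y \<in> arcs e (tcomp s1 x s2). \<not> inside y}
        = relabel (stretch x (arity t2)) {y \<in> arcs e s1. fst y \<noteq> (x, x + 1)}"
    using arcs_tcomp_split[OF x(1,3), of e s2] ar by (simp_all add: inside_def)
  have "relabel ((+) (x - 1)) (coloured (arcs (edge_blue e t1 ! (x - 1)) t2))
      = relabel ((+) (x - 1)) (coloured (arcs (edge_blue e s1 ! (x - 1)) s2))"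
    using arg_cong[OF C, of "\<lambda>S. {y \<in> S. inside y}"]
    unfolding coloured_filter[symmetric] split_t(1) split_s(1) coloured_relabel .
  then show "coloured (arcs (edge_blue e t1 ! (x - 1)) t2) = coloured (arcs (edge_blue e s1 ! (x - 1)) s2)"
    by (rule relabel_inj[rotated]) simp
  have "relabel (stretch x (arity t2)) (coloured {y \<in> arcs e t1. fst y \<noteq> (x, x + 1)})
      = relabel (stretch x (arity t2)) (coloured {y \<in> arcs e s1. fst y \<noteq> (x, x + 1)})"
    using arg_cong[OF C, of "\<lambda>S. {y \<in> S. \<not> inside y}"]
    unfolding coloured_filter[symmetric] split_t(2) split_s(2) coloured_relabel .
  then show "coloured {y \<in> arcs e t1. fst y \<noteq> (x, x + 1)} = coloured {y \<in> arcs e s1. fst y \<noteq> (x, x + 1)}"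
    by (rule relabel_inj[rotated]) (simp add: inj_stretch[OF arity_pos])
qed

lemma grafted_base_mem_arcs_tcomp:
  "1 \<le> i \<Longrightarrow> i \<le> arity t \<Longrightarrow>
    ((i, i + arity s), glue (edge_blue e t ! (i - 1)) (base_blue s)) \<in> arcs e (tcomp t i s)"
  by (simp add: arcs_tcomp grafted_arcs_def arcs_def[of _ s] relabel_insert)

lemma eval_tcomp_cancel:
  assumes eq: "eval (tcomp t1 x t2) = eval (tcomp s1 x s2)"
    and ar: "arity t1 = arity s1" "arity t2 = arity s2"
    and x: "1 \<le> x" "x \<le> arity t1"
    and arc: "((x, x + arity t2), k) \<in> arcs True (tcomp t1 x t2)" "k \<noteq> Plain"
  shows "eval t1 = eval s1 \<and> eval t2 = eval s2"
proof -
  define p where "p = edge_blue True t1 ! (x - 1)"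
  define p' where "p' = edge_blue True s1 ! (x - 1)"
  have x': "x \<le> arity s1" using x ar by simp
  have C: "coloured (arcs True (tcomp t1 x t2)) = coloured (arcs True (tcomp s1 x s2))"
    using eq by (simp add: eval_eq_iff)
  note cancel = coloured_arcs_tcomp_cancel[OF C ar(2) x x', folded p_def p'_def]
  have "k = glue p (base_blue t2)"
    using arcs_functional[OF arc(1) grafted_base_mem_arcs_tcomp[OF x]] by (simp add: p_def)
  moreover have "((x, x + arity t2), k) \<in> arcs True (tcomp s1 x s2)"
    using arc coloured_eq_mem[OF C] by blast
  then have "k = glue p' (base_blue s2)"
    using arcs_functional grafted_base_mem_arcs_tcomp[OF x(1) x'] ar(2) by (simp add: p'_def)
  ultimately have flags: "p = p'" "base_blue t2 = base_blue s2"
    using glue_inj[of p "base_blue t2" p' "base_blue s2"] arc(2) by auto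
  have "coloured (arcs True t2) = coloured (arcs True s2)"
    using arcs_change_flag[of True t2 p] arcs_change_flag[of True s2 p'] ar(2)
    by (simp add: coloured_insert coloured_filter cancel(1) flags(2))
  moreover have "coloured (arcs True t1) = coloured (arcs True s1)"
  proof -
    have "coloured (arcs True t1)
        = coloured (insert ((x, x + 1), glue p True) {y \<in> arcs True t1. fst y \<noteq> (x, x + 1)})"
      by (simp only: p_def arcs_edge_split[OF x, of True, symmetric])
    moreover have "coloured (arcs True s1)
        = coloured (insert ((x, x + 1), glue p' True) {y \<in> arcs True s1. fst y \<noteq> (x, x + 1)})"
      by (simp only: p'_def arcs_edge_split[OF x(1) x', of True, symmetric])
    ultimately show ?thesis using cancel(2) flags(1) by (simp only: coloured_insert coloured_filter)
  qed
  ultimately show ?thesis using ar by (simp add: eval_eq_iff)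
qed

lemma arcs_decompose:
  "((u, v), k) \<in> arcs e t \<Longrightarrow> \<exists>t1 t2. t = tcomp t1 u t2 \<and> 1 \<le> u \<and> u \<le> arity t1 \<and> v = u + arity t2"
proof (induction t arbitrary: e u v k)
  case Leaf
  then show ?case by (intro exI[of _ Leaf]) (auto simp: arcs_Leaf)
next
  case (Node g l r)
  have "arity l < u" if "((u - arity l, v - arity l), k) \<in> arcs (g = GQ) r" "arity l \<le> u"
    using arcs_range[OF that(1)] that(2) by linarith
  then consider "(u, v) = (1, arity (Node g l r) + 1)"
    | "((u, v), k) \<in> arcs (g = GP) l"
    | "((u - arity l, v - arity l), k) \<in> arcs (g = GQ) r" "arity l < u"
    using Node.prems by (auto simp: arcs_Node relabel_shift_iff)
  then show ?case
  proof cases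
    case 1
    then show ?thesis by (intro exI[of _ Leaf] exI[of _ "Node g l r"]) simp
  next
    case 2
    then obtain l1 l2 where "l = tcomp l1 u l2" "1 \<le> u" "u \<le> arity l1" "v = u + arity l2"
      using Node.IH(1) by blast
    then show ?thesis by (intro exI[of _ "Node g l1 r"] exI[of _ l2]) auto
  next
    case 3
    then obtain r1 r2 where "r = tcomp r1 (u - arity l) r2" "1 \<le> u - arity l" "u - arity l \<le> arity r1"
        "v - arity l = u - arity l + arity r2"
      using Node.IH(2) by blast
    then show ?thesis using 3 by (intro exI[of _ "Node g l r1"] exI[of _ r2]) auto
  qed
qed

fun flip :: "lab \<Rightarrow> lab" where
  "flip GP = GQ"
| "flip GQ = GP"

lemma flip_flip [simp]: "flip (flip g) = g"
  by (cases g) simp_all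

lemma flip_eq_iff [simp]: "flip g = GQ \<longleftrightarrow> g = GP" "flip g = GP \<longleftrightarrow> g = GQ"
  by (cases g; simp)+

lemma lab_neq_iff [simp]: "g \<noteq> GP \<longleftrightarrow> g = GQ" "g \<noteq> GQ \<longleftrightarrow> g = GP"
  by (cases g; simp)+

fun labelled :: "lab \<Rightarrow> tree \<Rightarrow> bool" where
  "labelled g Leaf = True"
| "labelled g (Node h l r) = (h = g)"

fun alternating :: "tree \<Rightarrow> bool" where
  "alternating Leaf = True"
| "alternating (Node g l r) \<longleftrightarrow> labelled (flip g) l \<and> labelled g r \<and> alternating l \<and> alternating r"

lemma glue_left_Plain_iff: "l \<noteq> Leaf \<Longrightarrow> glue (g = GP) (base_blue l) = Plain \<longleftrightarrow> labelled (flip g) l"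
  by (cases l) (auto simp: glue_def elim: flip.elims)

lemma glue_right_Plain_iff: "r \<noteq> Leaf \<Longrightarrow> glue (g = GQ) (base_blue r) = Plain \<longleftrightarrow> labelled g r"
  by (cases r) (auto simp: glue_def)

lemma alternating_if_diagonals_plain:
  "(\<And>u v k. ((u, v), k) \<in> coloured (inner_arcs t) \<Longrightarrow> v = u + 1) \<Longrightarrow> alternating t"
proof (induction t)
  case (Node g l r)
  have inner: "((u, v), k) \<in> coloured (inner_arcs (Node g l r)) \<longleftrightarrow> k \<noteq> Plain \<and>
      (((u, v), k) \<in> arcs (g = GP) l \<or> ((u, v), k) \<in> relabel ((+) (arity l)) (arcs (g = GQ) r))" for u v k
    by (auto simp: coloured_def inner_arcs_Node)
  have "alternating l"
  proof (rule Node.IH(1))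
    fix u v k assume "((u, v), k) \<in> coloured (inner_arcs l)"
    then have "((u, v), k) \<in> coloured (inner_arcs (Node g l r))"
      unfolding inner by (auto simp: coloured_def arcs_def)
    then show "v = u + 1" by (rule Node.prems)
  qed
  moreover have "alternating r"
  proof (rule Node.IH(2))
    fix u v k assume "((u, v), k) \<in> coloured (inner_arcs r)"
    then have "((arity l + u, arity l + v), k) \<in> coloured (inner_arcs (Node g l r))"
      unfolding inner by (auto simp: coloured_def arcs_def relabel_shift_iff)
    then show "v = u + 1" using Node.prems by force
  qed
  moreover have "labelled (flip g) l"
  proof (cases l)
    case (Node h l1 l2)
    then have "arity l + 1 \<noteq> 1 + 1" using arity_Node_ge2[of h l1 l2] by simp
    then have "glue (g = GP) (base_blue l) = Plain"
      using Node.prems[of 1 "arity l + 1" "glue (g = GP) (base_blue l)"] inner by (auto simp: arcs_def)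
    then show ?thesis using glue_left_Plain_iff Node by blast
  qed simp
  moreover have "labelled g r"
  proof (cases r)
    case (Node h r1 r2)
    then have "arity l + arity r + 1 \<noteq> arity l + 1 + 1" using arity_Node_ge2[of h r1 r2] by simp
    then have "glue (g = GQ) (base_blue r) = Plain"
      using Node.prems[of "arity l + 1" "arity l + arity r + 1" "glue (g = GQ) (base_blue r)"] inner
      by (auto simp: arcs_def relabel_shift_iff)
    then show ?thesis using glue_right_Plain_iff Node by blast
  qed simp
  ultimately show ?case by simp
qed simp

lemma op_cong_Node:
  assumes "op_cong rels l l'" "op_cong rels r r'"
  shows "op_cong rels (Node g l r) (Node g l' r')"
proof -
  have "op_cong rels (tcomp (Node g Leaf Leaf) 2 r) (tcomp (Node g Leaf Leaf) 2 r')"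
    using assms(2) by (rule op_cong.compR) auto
  then have "op_cong rels (tcomp (tcomp (Node g Leaf Leaf) 2 r) 1 l) (tcomp (tcomp (Node g Leaf Leaf) 2 r') 1 l)"
    by (rule op_cong.compL) (auto simp: arity_pos)
  moreover have
    "op_cong rels (tcomp (tcomp (Node g Leaf Leaf) 2 r') 1 l) (tcomp (tcomp (Node g Leaf Leaf) 2 r') 1 l')"
    using assms(1) by (rule op_cong.compR) (auto simp: arity_pos)
  ultimately have
    "op_cong rels (tcomp (tcomp (Node g Leaf Leaf) 2 r) 1 l) (tcomp (tcomp (Node g Leaf Leaf) 2 r') 1 l')"
    by (rule op_cong.trans)
  then show ?thesis by simp
qed

(* The two relations are the instances of this rotation with A, B, C and D leaves. *)
lemma op_cong_rotate:
  "op_cong rels (Node g A (Node g (Node (flip g) B C) D)) (Node g (Node (flip g) (Node g A B) C) D)"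
proof -
  let ?L = "Node g Leaf (Node g (Node (flip g) Leaf Leaf) Leaf)"
  let ?R = "Node g (Node (flip g) (Node g Leaf Leaf) Leaf) Leaf"
  have "rels ?L ?R"
    using rels.intros by (cases g) (simp_all add: gp_def gq_def)
  then have "op_cong rels ?L ?R" by (rule op_cong.base)
  then have "op_cong rels (tcomp ?L 4 D) (tcomp ?R 4 D)" by (rule op_cong.compL) auto
  then have "op_cong rels (tcomp (tcomp ?L 4 D) 3 C) (tcomp (tcomp ?R 4 D) 3 C)" by (rule op_cong.compL) auto
  then have "op_cong rels (tcomp (tcomp (tcomp ?L 4 D) 3 C) 2 B) (tcomp (tcomp (tcomp ?R 4 D) 3 C) 2 B)"
    by (rule op_cong.compL) auto
  then have "op_cong rels (tcomp (tcomp (tcomp (tcomp ?L 4 D) 3 C) 2 B) 1 A)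
      (tcomp (tcomp (tcomp (tcomp ?R 4 D) 3 C) 2 B) 1 A)"
    by (rule op_cong.compL) (auto simp: arity_pos)
  then show ?thesis by simp
qed

fun right_comb :: "lab \<Rightarrow> nat \<Rightarrow> tree" where
  "right_comb g 0 = Leaf"
| "right_comb g (Suc k) = Node g Leaf (right_comb g k)"

fun canonical :: "lab \<Rightarrow> tree \<Rightarrow> bool" where
  "canonical g Leaf = True"
| "canonical g (Node h l r) \<longleftrightarrow> h = g \<and> canonical (flip g) l \<and> (\<exists>k. r = right_comb g k)"

lemma alternating_right_comb: "alternating (right_comb g k) \<and> labelled g (right_comb g k)"
  by (induction k) (auto elim: right_comb.elims)

lemma canonical_alternating: "canonical g t \<Longrightarrow> alternating t \<and> labelled g t"
  by (induction t arbitrary: g) (auto simp: alternating_right_comb)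

lemma canonical_form_Node:
  assumes l: "canonical (flip g) l" and r: "canonical g r"
    and smaller: "\<And>L. alternating L \<Longrightarrow> labelled (flip g) L \<Longrightarrow> arity L < arity l + arity r \<Longrightarrow>
      \<exists>L'. op_cong rels L L' \<and> canonical (flip g) L'"
  shows "\<exists>t'. op_cong rels (Node g l r) t' \<and> canonical g t'"
proof (cases r)
  case Leaf
  then show ?thesis using l by (intro exI[of _ "Node g l r"]) (auto intro: op_cong.refl exI[of _ 0])
next
  case (Node h r1 r2)
  then obtain k where r2: "r2 = right_comb g k" and "h = g" and r1: "canonical (flip g) r1"
    using r by auto
  show ?thesis
  proof (cases r1)
    case Leaf
    then have "r = right_comb g (Suc k)" using Node r2 \<open>h = g\<close> by simp
    then show ?thesis using l by (intro exI[of _ "Node g l r"]) (auto intro: op_cong.refl simp del: right_comb.simps)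
  next
    case (Node h' B C)
    then obtain j where C: "C = right_comb (flip g) j" and "h' = flip g" and B: "canonical g B"
      using r1 by auto
    define L where "L = Node (flip g) (Node g l B) C"
    have rotated: "op_cong rels (Node g l r) (Node g L r2)"
      using op_cong_rotate[of g l B C r2] \<open>r = Node h r1 r2\<close> Node \<open>h = g\<close> \<open>h' = flip g\<close>
      by (simp add: L_def)
    have "alternating L" "labelled (flip g) L"
      using canonical_alternating[OF l] canonical_alternating[OF B] alternating_right_comb
      by (auto simp: L_def C)
    moreover have "arity L < arity l + arity r"
      using op_cong_arity[OF rotated] arity_pos[of r2] by simp
    ultimately obtain L' where "op_cong rels L L'" "canonical (flip g) L'"
      using smaller by blast
    then show ?thesis
      using op_cong.trans[OF rotated op_cong_Node[OF _ op_cong.refl]] r2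
      by (intro exI[of _ "Node g L' r2"]) auto
  qed
qed

lemma canonical_form_exists:
  "alternating t \<Longrightarrow> labelled g t \<Longrightarrow> \<exists>t'. op_cong rels t t' \<and> canonical g t'"
proof (induction "arity t" arbitrary: t g rule: less_induct)
  case less
  show ?case
  proof (cases t)
    case Leaf
    then show ?thesis by (auto intro: op_cong.refl)
  next
    case (Node h l r)
    then have h: "h = g" and l: "alternating l" "labelled (flip g) l" and r: "alternating r" "labelled g r"
      using less.prems by auto
    obtain l' where l': "op_cong rels l l'" "canonical (flip g) l'"
      using less.hyps[OF _ l] Node arity_pos[of r] by auto
    obtain r' where r': "op_cong rels r r'" "canonical g r'"
      using less.hyps[OF _ r] Node arity_pos[of l] by auto
    have t: "op_cong rels t (Node g l' r')" using op_cong_Node[OF l'(1) r'(1)] Node h by simp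
    have "arity l' + arity r' = arity t" using op_cong_arity[OF t] by simp
    then obtain t' where "op_cong rels (Node g l' r') t'" "canonical g t'"
      using canonical_form_Node[OF l'(2) r'(2)] less.hyps by metis
    then show ?thesis using op_cong.trans[OF t] by blast
  qed
qed

lemma append_replicate_cancel:
  "xs = [] \<or> last xs \<noteq> b \<Longrightarrow> ys = [] \<or> last ys \<noteq> b \<Longrightarrow> xs @ replicate n b = ys @ replicate n' b
    \<Longrightarrow> xs = ys \<and> n = n'"
proof (induction n arbitrary: n')
  case 0
  then show ?case by (cases n') (auto simp flip: replicate_append_same)
next
  case (Suc n)
  then show ?case by (cases n') (auto simp flip: replicate_append_same)
qed

lemma edge_blue_right_comb: "edge_blue (g = GQ) (right_comb g k) = replicate k (g = GP) @ [g = GQ]"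
  by (induction k) auto

lemma last_edge_blue_canonical: "canonical g t \<Longrightarrow> last (edge_blue (g = GQ) t) = (g = GQ)"
proof (cases t)
  case (Node h l r)
  moreover assume "canonical g t"
  ultimately obtain k where "h = g" "r = right_comb g k" by auto
  then show ?thesis using Node edge_blue_right_comb[of g k] by simp
qed simp

lemma canonical_edge_blue_tail:
  assumes "canonical (flip g) l"
  shows "\<exists>ys. edge_blue (g = GP) l = ys @ [g = GP] \<and> (ys = [] \<or> last ys \<noteq> (g = GP))"
proof (cases l)
  case (Node h l1 r1)
  then obtain j where "h = flip g" "r1 = right_comb (flip g) j" "canonical g l1"
    using assms by auto
  moreover have "last (edge_blue (g = GQ) l1) = (g = GQ)"
    using last_edge_blue_canonical[OF \<open>canonical g l1\<close>] .
  ultimately show ?thesis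
    using Node edge_blue_right_comb[of "flip g" j]
    by (intro exI[of _ "edge_blue (g = GQ) l1 @ replicate j (g = GQ)"]) (cases j; auto)
qed simp

(* The edge colours of Node g l (right_comb g k) end with a run of k + 1 copies of g = GP, one
   of them contributed by l, followed by g = GQ; this determines k and the edge colours of l. *)
lemma canonical_unique:
  "canonical g t \<Longrightarrow> canonical g s \<Longrightarrow> edge_blue (g = GQ) t = edge_blue (g = GQ) s \<Longrightarrow> t = s"
proof (induction t arbitrary: g s)
  case Leaf
  have "length (edge_blue (g = GQ) s) = 1" using Leaf.prems(3)[symmetric] by simp
  then have "arity s = 1" by (simp add: length_edge_blue)
  then show ?case by (metis arity_eq_1_iff)
next
  case (Node h l r)
  have "arity s = arity (Node h l r)"
    using arg_cong[OF Node.prems(3), of length] by (simp add: length_edge_blue)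
  then obtain h' l' r' where s: "s = Node h' l' r'"
    using arity_Node_ge2[of h l r] by (cases s) auto
  obtain k k' where t_parts: "h = g" "r = right_comb g k" "canonical (flip g) l"
    and s_parts: "h' = g" "r' = right_comb g k'" "canonical (flip g) l'"
    using Node.prems(1,2) s by auto
  obtain ys ys' where ys: "edge_blue (g = GP) l = ys @ [g = GP]" "ys = [] \<or> last ys \<noteq> (g = GP)"
    and ys': "edge_blue (g = GP) l' = ys' @ [g = GP]" "ys' = [] \<or> last ys' \<noteq> (g = GP)"
    using canonical_edge_blue_tail t_parts(3) s_parts(3) by metis
  have "edge_blue (g = GQ) (Node h l r) = (ys @ replicate (Suc k) (g = GP)) @ [g = GQ]"
    using t_parts ys(1) edge_blue_right_comb[of g k] by simp
  moreover have "edge_blue (g = GQ) s = (ys' @ replicate (Suc k') (g = GP)) @ [g = GQ]"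
    using s s_parts ys'(1) edge_blue_right_comb[of g k'] by simp
  ultimately have "(ys @ replicate (Suc k) (g = GP)) @ [g = GQ] = (ys' @ replicate (Suc k') (g = GP)) @ [g = GQ]"
    using Node.prems(3) by (simp only:)
  then have "ys @ replicate (Suc k) (g = GP) = ys' @ replicate (Suc k') (g = GP)"
    by (simp only: append1_eq_conv)
  from append_replicate_cancel[OF ys(2) ys'(2) this] have "ys = ys'" "k = k'" by simp_all
  then have "l = l'" using Node.IH(1)[OF t_parts(3) s_parts(3)] ys ys' by simp
  then show ?case using s t_parts s_parts \<open>k = k'\<close> by simp
qed

lemma edge_blue_eq_if_eval_eq:
  assumes "eval t = eval s"
  shows "edge_blue True t = edge_blue True s"
proof (rule nth_equalityI)
  have ar: "arity t = arity s" and C: "coloured (arcs True t) = coloured (arcs True s)"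
    using assms by (simp_all add: eval_eq_iff)
  then show "length (edge_blue True t) = length (edge_blue True s)" by (simp add: length_edge_blue)
  fix j assume "j < length (edge_blue True t)"
  then have j: "1 \<le> j + 1" "j + 1 \<le> arity t" "j + 1 \<le> arity s" using ar by (simp_all add: length_edge_blue)
  have "edge_blue True t ! j \<longleftrightarrow> ((j + 1, j + 1 + 1), Blue) \<in> arcs True t"
    using arcs_edge_colour_iff[OF j(1,2)] by (simp add: glue_def)
  also have "\<dots> \<longleftrightarrow> ((j + 1, j + 1 + 1), Blue) \<in> arcs True s"
    using coloured_eq_mem[OF C] by simp
  also have "\<dots> \<longleftrightarrow> edge_blue True s ! j"
    using arcs_edge_colour_iff[OF j(1,3)] by (simp add: glue_def)
  finally show "edge_blue True t ! j = edge_blue True s ! j" by simp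
qed

lemma base_blue_eq_if_eval_eq:
  assumes "eval t = eval s"
  shows "base_blue t = base_blue s"
proof -
  have ar: "arity t = arity s" and C: "coloured (arcs True t) = coloured (arcs True s)"
    using assms by (simp_all add: eval_eq_iff)
  have "base_blue t \<longleftrightarrow> ((1, arity t + 1), Blue) \<in> arcs True t"
    using arcs_base_colour_iff by (simp add: glue_def)
  also have "\<dots> \<longleftrightarrow> ((1, arity s + 1), Blue) \<in> arcs True s"
    using coloured_eq_mem[OF C] ar by simp
  also have "\<dots> \<longleftrightarrow> base_blue s"
    using arcs_base_colour_iff by (simp add: glue_def)
  finally show ?thesis .
qed

lemma coloured_inner_arcs_eq_if_eval_eq:
  "eval t = eval s \<Longrightarrow> coloured (inner_arcs t) = coloured (inner_arcs s)"
  by (simp add: eval_eq_iff inner_arcs_eq_filter[of _ True] coloured_filter)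

lemma op_cong_if_eval_eq_alternating:
  assumes "alternating t" "alternating s" "eval t = eval s"
  shows "op_cong rels t s"
proof (cases t)
  case Leaf
  then have "s = Leaf" using assms(3) by (metis bsize_eval arity_eq_1_iff)
  then show ?thesis using Leaf by (simp add: op_cong.refl)
next
  case (Node g l r)
  have "arity s = arity t" using assms(3) by (metis bsize_eval)
  then obtain h l' r' where s: "s = Node h l' r'"
    using Node arity_Node_ge2[of g l r] by (cases s) auto
  moreover have "h = g"
    using base_blue_eq_if_eval_eq[OF assms(3)] Node s by (cases g; cases h) auto
  ultimately have s: "s = Node g l' r'" by simp
  obtain t' s' where t': "op_cong rels t t'" "canonical g t'" and s': "op_cong rels s s'" "canonical g s'"
    using canonical_form_exists assms(1,2) Node s by (metis labelled.simps(2))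
  have "eval t' = eval s'" using eval_op_cong[OF t'(1)] eval_op_cong[OF s'(1)] assms(3) by simp
  moreover have "2 \<le> arity t'" "2 \<le> arity s'"
    using op_cong_arity[OF t'(1)] op_cong_arity[OF s'(1)] arity_Node_ge2 Node s by metis+
  then have "t' \<noteq> Leaf" "s' \<noteq> Leaf" by auto
  ultimately have "edge_blue (g = GQ) t' = edge_blue (g = GQ) s'"
    using edge_blue_eq_if_eval_eq edge_blue_Node_indep by metis
  then have "t' = s'" using canonical_unique t'(2) s'(2) by blast
  then show ?thesis using t'(1) s'(1) by (metis op_cong.sym op_cong.trans)
qed

lemma eval_eq_split_at_coloured_diagonal:
  assumes eq: "eval t = eval s"
    and arc: "((u, v), k) \<in> coloured (inner_arcs t)" "v \<noteq> u + 1"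
  obtains t1 t2 s1 s2 where "t = tcomp t1 u t2" "s = tcomp s1 u s2" "1 \<le> u" "u \<le> arity t1"
    "arity t1 = arity s1" "arity t1 < arity t" "arity t2 < arity t"
    "eval t1 = eval s1" "eval t2 = eval s2"
proof -
  have ar: "arity t = arity s" using eq by (metis bsize_eval)
  have k: "k \<noteq> Plain" and inner: "((u, v), k) \<in> inner_arcs t" using arc(1) by (auto simp: coloured_def)
  moreover have "((u, v), k) \<in> inner_arcs s"
    using arc(1) unfolding coloured_inner_arcs_eq_if_eval_eq[OF eq] by (simp add: coloured_def)
  ultimately have in_t: "((u, v), k) \<in> arcs True t" and in_s: "((u, v), k) \<in> arcs True s"
    by (auto simp: arcs_def)
  obtain t1 t2 where t: "t = tcomp t1 u t2" "1 \<le> u" "u \<le> arity t1" "v = u + arity t2"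
    using arcs_decompose[OF in_t] by blast
  obtain s1 s2 where s: "s = tcomp s1 u s2" "u \<le> arity s1" "v = u + arity s2"
    using arcs_decompose[OF in_s] by blast
  have ar_t: "arity t = arity t1 + arity t2 - 1" using arity_tcomp t by simp
  have ar_s: "arity s = arity s1 + arity s2 - 1" using arity_tcomp s t(2) by simp
  have ar2: "arity t2 = arity s2" using t(4) s(3) by simp
  then have ar1: "arity t1 = arity s1" using ar ar_t ar_s arity_pos[of t2] arity_pos[of s1] by linarith
  have "arity t2 \<noteq> 1" using t(4) arc(2) by simp
  then have lt1: "arity t1 < arity t" using ar_t arity_pos[of t2] by linarith
  have "t1 \<noteq> Leaf"
  proof
    assume "t1 = Leaf"
    then have "t = t2" "u = 1" using t by auto
    then show False using inner_arcs_range[OF inner] t(4) by simp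
  qed
  then have "arity t1 \<noteq> 1" by (metis arity_eq_1_iff)
  then have lt2: "arity t2 < arity t" using ar_t arity_pos[of t1] by linarith
  have "eval t1 = eval s1 \<and> eval t2 = eval s2"
    using eval_tcomp_cancel[of t1 u t2 s1 s2 k] eq t s ar1 ar2 in_t k by simp
  then show ?thesis using that t s ar1 lt1 lt2 by blast
qed

lemma op_cong_if_eval_eq: "eval t = eval s \<Longrightarrow> op_cong rels t s"
proof (induction "arity t" arbitrary: t s rule: less_induct)
  case less
  show ?case
  proof (cases "\<exists>u v k. ((u, v), k) \<in> coloured (inner_arcs t) \<and> v \<noteq> u + 1")
    case True
    then obtain u v k where "((u, v), k) \<in> coloured (inner_arcs t)" "v \<noteq> u + 1" by blast
    with less.prems obtain t1 t2 s1 s2 where split: "t = tcomp t1 u t2" "s = tcomp s1 u s2" "1 \<le> u"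
        "u \<le> arity t1" "arity t1 = arity s1"
      and "op_cong rels t1 s1" "op_cong rels t2 s2"
      by (rule eval_eq_split_at_coloured_diagonal) (use less.hyps in blast)
    then have "op_cong rels (tcomp t1 u t2) (tcomp s1 u t2)" "op_cong rels (tcomp s1 u t2) (tcomp s1 u s2)"
      by (auto intro: op_cong.compL op_cong.compR)
    then show ?thesis using split(1,2) by (metis op_cong.trans)
  next
    case False
    then have "alternating t" by (blast intro: alternating_if_diagonals_plain)
    moreover have "alternating s"
      using False coloured_inner_arcs_eq_if_eval_eq[OF less.prems]
      by (blast intro: alternating_if_diagonals_plain)
    ultimately show ?thesis using less.prems by (rule op_cong_if_eval_eq_alternating)
  qed
qed

theorem theorem3p15:
  shows "range eval = generated_suboperad {T_bbu, T_uub}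
         \<and> (\<forall>t s. eval t = eval s \<longleftrightarrow> op_cong rels t s)"
  using range_eval op_cong_if_eval_eq eval_op_cong by blast

end
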